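(* Let $X$ be a nonnegative integer-valued random variable whose PGF $X(z)$ has radius of convergence $r>1$, with mean $\mu=X'(1)>0$ and variance $\sigma^2>0$, such that $|X(z)|<X(r_1)$ whenever $|z|=r_1$, $z\ne r_1$, $r_1\in(0,r)$. For positive integers $n,s$ let $A(z)=X(z)^n$, with $n\mu<s$ and degree of $X(z)$ larger than $s/n$, and let $Z_0$ be the zero of $z^s-A(z)$ of minimal modulus in $1<|z|<r$. Suppose $\frac{n\mu}{s}=1-\frac{\gamma}{\sqrt s}$ with $\gamma$ bounded away from $0$ and $\infty$ as $s\to\infty$. Then, as $s\to\infty$, $$\frac{1}{Z_0^{N+1}}=\exp\Big(\frac{-2L\gamma\mu}{\sigma^2}\Big)\big(1+O(s^{-1/2})\big)$$ whenever $N+1=L\sqrt{s}$ with $L>0$ bounded away from $0$ and $\infty$.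
   Context: $\sigma^2=X''(1)-X'(1)^2+X'(1)$. $Z_0$ is real and larger than $1$. $O$-terms refer to $s\to\infty$ with constants independent of $s$. *)

theory Defs
  imports "HOL-Probability.Probability"
begin

definition pgf :: "nat pmf \<Rightarrow> complex \<Rightarrow> complex" where
  "pgf X z = (\<Sum>k. complex_of_real (pmf X k) * z ^ k)"

definition pgf_real :: "nat pmf \<Rightarrow> real \<Rightarrow> real" where
  "pgf_real X x = (\<Sum>k. pmf X k * x ^ k)"

definition pgf_radius :: "nat pmf \<Rightarrow> ereal" where
  "pgf_radius X = conv_radius (\<lambda>k. complex_of_real (pmf X k))"

text \<open>X'(1) and X''(1) (series of the derivatives of the PGF, evaluated at 1).\<close>
definition pgf_d1 :: "nat pmf \<Rightarrow> real" where
  "pgf_d1 X = (\<Sum>k. real k * pmf X k)"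

definition pgf_d2 :: "nat pmf \<Rightarrow> real" where
  "pgf_d2 X = (\<Sum>k. real k * (real k - 1) * pmf X k)"

definition pgf_var :: "nat pmf \<Rightarrow> real" where
  "pgf_var X = pgf_d2 X - (pgf_d1 X)\<^sup>2 + pgf_d1 X"

end

theory Submission
  imports Defs
begin

text \<open>Put \<open>F(\<delta>) = s ln(1 + \<delta>) - n ln X(1 + \<delta>)\<close>; its positive zeros are the real roots \<open>1 + \<delta>\<close>
  of \<open>z^s = X(z)^n\<close>. A second-order expansion of \<open>ln X\<close> at \<open>1\<close>, together with
  \<open>n\<mu> = s - \<gamma>\<surd>s\<close>, gives \<open>F(\<delta>) = \<gamma>\<surd>s \<delta> - a s \<delta>\<^sup>2 + O(\<surd>s \<delta>\<^sup>2 + s \<delta>\<^sup>3)\<close> with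
  \<open>a = \<sigma>\<^sup>2/(2\<mu>)\<close>. So \<open>F\<close> is positive just right of \<open>0\<close> and negative at \<open>\<delta> = 2\<gamma>\<^sub>2/(a\<surd>s)\<close>,
  hence has a zero of order \<open>1/\<surd>s\<close>, and every such zero satisfies
  \<open>\<surd>s \<delta> = \<gamma>/a + O(1/\<surd>s)\<close>. The strict maximum of \<open>|X|\<close> on circles forces the root of minimal
  modulus to be real: a nonreal root of modulus \<open>\<rho>\<close> would give \<open>F(\<rho> - 1) < 0\<close>, and the
  intermediate value theorem would produce a smaller real root. Finally
  \<open>(N + 1) ln Z\<^sub>0 = L \<surd>s ln(1 + \<delta>) = 2L\<gamma>\<mu>/\<sigma>\<^sup>2 + O(1/\<surd>s)\<close>, and exponentiating gives the claim.\<close>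

lemma ln_one_plus_ge_quadratic:
  fixes w :: real
  assumes "0 \<le> w"
  shows "w - w^2/2 \<le> ln (1 + w)"
proof -
  define g where "g x = ln (1 + x) - x + x^2/2" for x :: real
  have "g 0 \<le> g w"
  proof (rule deriv_nonneg_imp_mono[where g = g and g' = "\<lambda>x. 1/(1 + x) - 1 + x"])
    fix x assume x: "x \<in> {0..w}"
    show "(g has_real_derivative 1/(1 + x) - 1 + x) (at x)"
      using x unfolding g_def[abs_def] by (auto intro!: derivative_eq_intros simp: field_simps)
    have "1/(1 + x) - 1 + x = x^2/(1 + x)"
      using x by (simp add: field_simps power2_eq_square)
    then show "0 \<le> 1/(1 + x) - 1 + x" using x by simp
  qed (use assms in auto)
  then show ?thesis by (simp add: g_def)
qed

lemma ln_one_plus_le_cubic: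
  fixes w :: real
  assumes "0 \<le> w"
  shows "ln (1 + w) \<le> w - w^2/2 + w^3/3"
proof -
  define g where "g x = x - x^2/2 + x^3/3 - ln (1 + x)" for x :: real
  have "g 0 \<le> g w"
  proof (rule deriv_nonneg_imp_mono[where g = g and g' = "\<lambda>x. 1 - x + x^2 - 1/(1 + x)"])
    fix x assume x: "x \<in> {0..w}"
    show "(g has_real_derivative 1 - x + x^2 - 1/(1 + x)) (at x)"
      using x unfolding g_def[abs_def] by (auto intro!: derivative_eq_intros simp: field_simps power2_eq_square)
    have "1 - x + x^2 - 1/(1 + x) = x^3/(1 + x)"
      using x by (simp add: field_simps power2_eq_square power3_eq_cube)
    then show "0 \<le> 1 - x + x^2 - 1/(1 + x)" using x by simp
  qed (use assms in auto)
  then show ?thesis by (simp add: g_def)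
qed

lemma abs_ln_one_plus_minus_quadratic_le:
  fixes w :: real
  assumes "0 \<le> w"
  shows "\<bar>ln (1 + w) - (w - w^2/2)\<bar> \<le> w^3"
  using ln_one_plus_ge_quadratic[OF assms] ln_one_plus_le_cubic[OF assms] assms by auto

lemma ln_one_plus_second_order:
  fixes \<mu> d2 M h0 h R :: real
  defines "B \<equiv> \<mu> + d2 * h0 / 2 + M * h0^2"
  assumes mu: "0 < \<mu>" and d2: "0 \<le> d2" and M: "0 \<le> M"
    and h: "0 \<le> h" "h \<le> h0" "B * h \<le> 1"
    and R: "0 \<le> R" "R \<le> M * h^3"
  shows "\<bar>ln (1 + (\<mu> * h + d2/2 * h^2 + R)) - \<mu> * h - (d2 - \<mu>^2)/2 * h^2\<bar>
          \<le> (M + (d2/2 + M * h0) * B + B^3) * h^3"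
proof -
  define v where "v = d2/2 * h^2 + R"
  define w where "w = \<mu> * h + v"
  have v0: "0 \<le> v" unfolding v_def using d2 R by simp
  have w0: "0 \<le> w" unfolding w_def using mu h v0 by simp
  have v_le: "v \<le> (d2/2 + M * h0) * h^2"
  proof -
    have "h * h^2 \<le> h0 * h^2" using h by (intro mult_right_mono) auto
    then have "M * h^3 \<le> M * (h0 * h^2)"
      using M by (intro mult_left_mono) (auto simp: power3_eq_cube power2_eq_square)
    then show ?thesis unfolding v_def using R by (simp add: algebra_simps)
  qed
  have "v \<le> (d2/2 + M * h0) * (h0 * h)"
    using v_le h d2 M by (smt (verit) mult_left_mono mult_right_mono power2_eq_square
        zero_le_divide_iff mult_nonneg_nonneg)
  then have w_le: "w \<le> B * h"
    unfolding w_def B_def by (simp add: algebra_simps power2_eq_square)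
  have ln_err: "\<bar>ln (1 + w) - (w - w^2/2)\<bar> \<le> B^3 * h^3"
    using abs_ln_one_plus_minus_quadratic_le[OF w0] power_mono[OF w_le w0, of 3]
    by (simp add: power_mult_distrib)
  have cross: "0 \<le> v * (w + \<mu> * h)" "v * (w + \<mu> * h) \<le> (d2/2 + M * h0) * h^2 * (2 * (B * h))"
    using v_le w_le v0 w0 mu h
    by (auto intro!: mult_mono simp: w_def)
  \<comment> \<open>The quadratic part of \<open>w^2\<close> beyond \<open>\<mu>^2 h^2\<close> factors as \<open>v (w + \<mu> h)\<close>, which is \<open>O(h^3)\<close>.\<close>
  have "ln (1 + (\<mu> * h + d2/2 * h^2 + R)) - \<mu> * h - (d2 - \<mu>^2)/2 * h^2
        = (ln (1 + w) - (w - w^2/2)) + R - v * (w + \<mu> * h)/2"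
    unfolding w_def v_def by (simp add: field_simps power2_eq_square)
  then have "\<bar>ln (1 + (\<mu> * h + d2/2 * h^2 + R)) - \<mu> * h - (d2 - \<mu>^2)/2 * h^2\<bar>
        \<le> \<bar>ln (1 + w) - (w - w^2/2)\<bar> + R + v * (w + \<mu> * h)/2"
    using R cross(1) by linarith
  also have "\<dots> \<le> B^3 * h^3 + M * h^3 + (d2/2 + M * h0) * B * h^3"
  proof -
    have "(d2/2 + M * h0) * h^2 * (2 * (B * h)) / 2 = (d2/2 + M * h0) * B * h^3"
      by (simp add: power2_eq_square power3_eq_cube)
    then show ?thesis using ln_err R cross(2) by linarith
  qed
  finally show ?thesis by (simp add: algebra_simps)
qed

lemma scaled_ln_one_plus_estimate:
  fixes a \<gamma> q d u B :: real
  assumes a: "0 < a" and q: "0 < q" and d: "0 \<le> d" "d \<le> 1" "q * d \<le> u"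
    and close: "\<bar>\<gamma> - a * (q * d)\<bar> \<le> B / q"
  shows "\<bar>q * ln (1 + d) - \<gamma> / a\<bar> \<le> (u^2 + B / a) / q"
proof -
  have "\<bar>q * ln (1 + d) - q * d\<bar> \<le> q * d^2"
    using abs_ln_one_plus_x_minus_x_bound_nonneg[OF d(1,2)] q
    by (simp add: abs_mult mult_left_mono flip: right_diff_distrib)
  also have "\<dots> = (q * d)^2 / q" using q by (simp add: power2_eq_square)
  also have "\<dots> \<le> u^2 / q" using q d by (intro divide_right_mono power_mono) auto
  finally have ln_part: "\<bar>q * ln (1 + d) - q * d\<bar> \<le> u^2 / q" .
  have "\<bar>q * d - \<gamma> / a\<bar> = \<bar>\<gamma> - a * (q * d)\<bar> / a"
    using a by (simp add: field_simps abs_minus_commute)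
  also have "\<dots> \<le> B / a / q" using close a by (simp add: divide_right_mono field_simps)
  finally show ?thesis using ln_part by (simp add: add_divide_distrib)
qed

lemma abs_exp_minus_one_le: "\<bar>exp x - 1\<bar> \<le> \<bar>x\<bar> * exp \<bar>x\<bar>" for x :: real
proof (cases "0 \<le> x")
  case True
  have "1 - x \<le> exp (-x)" using exp_ge_add_one_self[of "-x"] by simp
  then have "(1 - x) * exp x \<le> 1" by (simp add: exp_minus field_simps)
  then show ?thesis using True by (simp add: algebra_simps)
next
  case False
  then have "exp x \<le> 1" by simp
  then have "\<bar>exp x - 1\<bar> \<le> \<bar>x\<bar> * 1" using exp_ge_add_one_self[of x] by linarith
  also have "\<dots> \<le> \<bar>x\<bar> * exp \<bar>x\<bar>" by (intro mult_left_mono) auto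
  finally show ?thesis .
qed

lemma inverse_power_exp_estimate:
  fixes \<rho> q A E L L2 :: real and N :: nat
  assumes \<rho>: "1 < \<rho>" and q: "1 \<le> q" and E: "0 \<le> E"
    and close: "\<bar>q * ln \<rho> - A\<bar> \<le> E / q"
    and N: "real (N + 1) = L * q" and L: "0 < L" "L \<le> L2"
  shows "cmod (1 / complex_of_real \<rho> ^ (N + 1) - complex_of_real (exp (- (L * A))))
           \<le> L2 * E * exp (L2 * E) * exp (- (L * A)) / q"
proof -
  define T where "T = real (N + 1) * ln \<rho>"
  have "T - L * A = L * (q * ln \<rho> - A)" unfolding T_def N by (simp add: algebra_simps)
  then have "\<bar>T - L * A\<bar> = L * \<bar>q * ln \<rho> - A\<bar>" using L by (simp add: abs_mult)
  also have "\<dots> \<le> L2 * (E / q)" using close L E q by (intro mult_mono) auto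
  finally have TA: "\<bar>T - L * A\<bar> \<le> L2 * E / q" by simp
  also have "\<dots> \<le> L2 * E / 1" using q L E by (intro frac_le) auto
  finally have TA1: "\<bar>T - L * A\<bar> \<le> L2 * E" by simp
  have "exp T = \<rho> ^ (N + 1)" unfolding T_def ln_realpow[symmetric] using \<rho> by simp
  then have "1 / complex_of_real \<rho> ^ (N + 1) = complex_of_real (exp (- T))"
    by (simp add: exp_minus divide_inverse flip: of_real_power)
  then have "cmod (1 / complex_of_real \<rho> ^ (N + 1) - complex_of_real (exp (- (L * A))))
      = \<bar>exp (- T) - exp (- (L * A))\<bar>"
    by (simp flip: of_real_diff)
  also have "\<dots> = exp (- (L * A)) * \<bar>exp (- (T - L * A)) - 1\<bar>"
    by (simp add: abs_mult exp_diff exp_minus field_simps)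
  also have "\<dots> \<le> exp (- (L * A)) * (\<bar>T - L * A\<bar> * exp \<bar>T - L * A\<bar>)"
    using abs_exp_minus_one_le[of "- (T - L * A)"] by (intro mult_left_mono) (auto simp: abs_minus_commute)
  also have "\<dots> \<le> exp (- (L * A)) * (L2 * E / q * exp (L2 * E))"
    using TA TA1 by (intro mult_left_mono mult_mono) auto
  finally show ?thesis by (simp add: ac_simps)
qed

lemma power_eq_power_iff_ln:
  "0 < x \<Longrightarrow> 0 < y \<Longrightarrow> x ^ s = y ^ n \<longleftrightarrow> real s * ln x = real n * ln y" for x y :: real
  by (metis ln_inj_iff ln_realpow zero_less_power)

lemma power_less_power_iff_ln:
  "0 < x \<Longrightarrow> 0 < y \<Longrightarrow> x ^ s < y ^ n \<longleftrightarrow> real s * ln x < real n * ln y" for x y :: real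
  by (metis ln_less_cancel_iff ln_realpow zero_less_power)

lemma norm_one_plus_of_real: "0 \<le> t \<Longrightarrow> cmod (1 + complex_of_real t) = 1 + t"
  using norm_of_real[of "1 + t"] by simp

section \<open>Second-order expansion of power series with nonnegative coefficients\<close>

definition binomial_remainder :: "real \<Rightarrow> nat \<Rightarrow> real" where
  "binomial_remainder h k = (1 + h)^k - 1 - real k * h - real k * (real k - 1) / 2 * h^2"

lemma binomial_remainder_Suc:
  "binomial_remainder h (Suc k) = (1 + h) * binomial_remainder h k + real k * (real k - 1) / 2 * h^3"
  unfolding binomial_remainder_def by (simp add: field_simps power2_eq_square power3_eq_cube)

lemma of_nat_mult_pred_nonneg: "0 \<le> real k * (real k - 1)"
  by (cases k) auto

lemma binomial_remainder_nonneg: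
  assumes "0 \<le> h"
  shows "0 \<le> binomial_remainder h k"
proof (induction k)
  case 0
  then show ?case by (simp add: binomial_remainder_def)
next
  case (Suc k)
  then show ?case
    using assms of_nat_mult_pred_nonneg[of k] by (simp add: binomial_remainder_Suc)
qed

lemma binomial_remainder_le_power:
  assumes "0 \<le> h"
  shows "binomial_remainder h k \<le> (1 + h)^k"
proof -
  have "0 \<le> real k * (real k - 1) / 2 * h^2" "0 \<le> real k * h"
    using of_nat_mult_pred_nonneg[of k] assms by simp_all
  then show ?thesis unfolding binomial_remainder_def by linarith
qed

lemma binomial_remainder_le_scaled:
  assumes "0 \<le> h" "h \<le> h0"
  shows "binomial_remainder h k \<le> (h/h0)^3 * binomial_remainder h0 k"
proof (induction k)
  case 0
  then show ?case by (simp add: binomial_remainder_def)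
next
  case (Suc k)
  have "binomial_remainder h (Suc k) \<le> (1 + h0) * ((h/h0)^3 * binomial_remainder h0 k)
          + real k * (real k - 1) / 2 * h^3"
    unfolding binomial_remainder_Suc using Suc assms binomial_remainder_nonneg[of h k]
    by (intro add_right_mono mult_mono) auto
  also have "\<dots> = (h/h0)^3 * binomial_remainder h0 (Suc k)"
    using assms by (cases "h0 = 0") (auto simp: binomial_remainder_Suc field_simps power3_eq_cube)
  finally show ?case .
qed

context
  fixes p :: "nat \<Rightarrow> real" and h0 :: real
  assumes p_nonneg: "\<And>k. 0 \<le> p k" and h0_pos: "0 < h0"
    and summable_h0: "summable (\<lambda>k. p k * (1 + h0)^k)"
begin

lemma summable_nonneg_powser_below:
  assumes "0 \<le> h" "h \<le> h0"
  shows "summable (\<lambda>k. p k * (1 + h)^k)"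
proof (rule summable_comparison_test[OF _ summable_h0])
  have "(1 + h)^k \<le> (1 + h0)^k" for k using assms by (intro power_mono) auto
  then show "\<exists>N. \<forall>k\<ge>N. norm (p k * (1 + h)^k) \<le> p k * (1 + h0)^k"
    using p_nonneg assms by (auto intro!: mult_left_mono)
qed

lemma summable_first_factorial_moment: "summable (\<lambda>k. real k * p k)"
proof (rule summable_comparison_test[OF _ summable_divide[OF summable_h0, of h0]])
  have "real k * h0 * p k \<le> (1 + h0)^k * p k" for k
    using Bernoulli_inequality[of h0 k] h0_pos p_nonneg[of k] by (intro mult_right_mono) auto
  then have "real k * p k \<le> p k * (1 + h0)^k / h0" for k
    by (simp add: pos_le_divide_eq[OF h0_pos] algebra_simps)
  then show "\<exists>N. \<forall>k\<ge>N. norm (real k * p k) \<le> p k * (1 + h0)^k / h0"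
    using p_nonneg by auto
qed

lemma summable_second_factorial_moment: "summable (\<lambda>k. real k * (real k - 1) * p k)"
proof (rule summable_comparison_test[OF _ summable_divide[OF summable_h0, of "h0^2/2"]])
  have "real k * (real k - 1) / 2 * h0^2 \<le> (1 + h0)^k" for k
    using binomial_remainder_nonneg[of h0 k] h0_pos mult_nonneg_nonneg[of "real k" h0]
    unfolding binomial_remainder_def by linarith
  then have le: "real k * (real k - 1) * (h0^2/2) * p k \<le> (1 + h0)^k * p k" for k
    using p_nonneg[of k] by (intro mult_right_mono) (simp_all add: algebra_simps)
  have pos: "0 < h0^2/2" using h0_pos by simp
  have "real k * (real k - 1) * p k \<le> p k * (1 + h0)^k / (h0^2/2)" for k
    unfolding pos_le_divide_eq[OF pos] using le[of k] by (simp add: algebra_simps)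
  then show "\<exists>N. \<forall>k\<ge>N. norm (real k * (real k - 1) * p k) \<le> p k * (1 + h0)^k / (h0^2/2)"
    using p_nonneg of_nat_mult_pred_nonneg by auto
qed

lemma nonneg_powser_second_order_expansion:
  assumes h: "0 \<le> h" "h \<le> h0"
  obtains R where
    "(\<Sum>k. p k * (1 + h)^k) = (\<Sum>k. p k) + (\<Sum>k. real k * p k) * h
       + (\<Sum>k. real k * (real k - 1) * p k) / 2 * h^2 + R"
    "0 \<le> R" "R \<le> (h/h0)^3 * (\<Sum>k. p k * (1 + h0)^k)"
proof -
  have remainder_le: "p k * binomial_remainder h k \<le> (h/h0)^3 * (p k * (1 + h0)^k)" for k
  proof -
    have "binomial_remainder h k \<le> (h/h0)^3 * (1 + h0)^k"
      using binomial_remainder_le_scaled[OF h, of k] binomial_remainder_le_power[of h0 k] h h0_pos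
      by (smt (verit) mult_left_mono zero_le_divide_iff zero_le_power)
    then show ?thesis using p_nonneg[of k] by (simp add: mult_left_mono algebra_simps)
  qed
  have remainder_nonneg: "0 \<le> p k * binomial_remainder h k" for k
    using p_nonneg[of k] binomial_remainder_nonneg[OF h(1)] by simp
  have summable_remainder: "summable (\<lambda>k. p k * binomial_remainder h k)"
    by (rule summable_comparison_test[OF _ summable_mult[OF summable_h0, of "(h/h0)^3"]])
       (use remainder_le remainder_nonneg in auto)
  define R where "R = (\<Sum>k. p k * binomial_remainder h k)"
  have "(\<lambda>k. p k + h * (real k * p k) + h^2/2 * (real k * (real k - 1) * p k)
          + p k * binomial_remainder h k)
      sums ((\<Sum>k. p k) + h * (\<Sum>k. real k * p k)
          + h^2/2 * (\<Sum>k. real k * (real k - 1) * p k) + R)"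
    unfolding R_def
    using summable_nonneg_powser_below[of 0] h0_pos
    by (intro sums_add sums_mult summable_sums summable_first_factorial_moment
          summable_second_factorial_moment summable_remainder) simp_all
  moreover have "(\<lambda>k. p k + h * (real k * p k) + h^2/2 * (real k * (real k - 1) * p k)
          + p k * binomial_remainder h k) = (\<lambda>k. p k * (1 + h)^k)"
    by (simp add: binomial_remainder_def field_simps)
  ultimately have "(\<Sum>k. p k * (1 + h)^k) = (\<Sum>k. p k) + h * (\<Sum>k. real k * p k)
          + h^2/2 * (\<Sum>k. real k * (real k - 1) * p k) + R"
    by (simp add: sums_iff)
  moreover have "0 \<le> R"
    unfolding R_def by (intro suminf_nonneg summable_remainder remainder_nonneg)
  moreover have "R \<le> (h/h0)^3 * (\<Sum>k. p k * (1 + h0)^k)"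
    unfolding R_def suminf_mult[OF summable_h0, symmetric]
    by (intro suminf_le remainder_le summable_remainder summable_mult summable_h0)
  ultimately show ?thesis by (intro that) (simp_all add: algebra_simps)
qed

end

section \<open>Probability generating functions near \<open>1\<close>\<close>

lemma pmf_sums_one: "pmf X sums 1"
  using sums_infsetsum_nat'[OF pmf_abs_summable, of X] by (simp add: infsetsum_pmf_eq_1)

lemma ereal_one_plus_less_radius:
  "ereal (1 + h) < pgf_radius X \<Longrightarrow> \<delta> \<le> h \<Longrightarrow> ereal (1 + \<delta>) < pgf_radius X"
  by (meson add_left_mono ereal_less_eq(3) order.strict_trans1)

lemma summable_pgf_real:
  assumes "0 \<le> x" "ereal x < pgf_radius X"
  shows "summable (\<lambda>k. pmf X k * x^k)"
proof -
  have "summable (\<lambda>k. norm (complex_of_real (pmf X k) * complex_of_real x ^ k))"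
    by (rule abs_summable_in_conv_radius) (use assms in \<open>simp add: pgf_radius_def\<close>)
  then show ?thesis using assms by (simp add: norm_mult norm_power)
qed

lemma pgf_of_real:
  assumes "0 \<le> x" "ereal x < pgf_radius X"
  shows "pgf X (complex_of_real x) = complex_of_real (pgf_real X x)"
proof -
  have "complex_of_real (pgf_real X x) = (\<Sum>k. complex_of_real (pmf X k * x^k))"
    unfolding pgf_real_def by (rule suminf_of_real[OF summable_pgf_real[OF assms]])
  then show ?thesis by (simp add: pgf_def)
qed

lemma pgf_real_ge_one:
  assumes "1 \<le> x" "ereal x < pgf_radius X"
  shows "1 \<le> pgf_real X x"
proof -
  have "1 = (\<Sum>k. pmf X k)" using pmf_sums_one by (simp add: sums_iff)
  also have "\<dots> \<le> (\<Sum>k. pmf X k * x^k)"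
  proof (rule suminf_le)
    show "pmf X k \<le> pmf X k * x^k" for k
      using mult_left_mono[OF one_le_power[OF assms(1)], of "pmf X k" k] by simp
  qed (use pmf_sums_one summable_pgf_real[of x X] assms in \<open>auto simp: sums_iff\<close>)
  finally show ?thesis unfolding pgf_real_def .
qed

lemma isCont_pgf_real:
  assumes "0 \<le> x" "ereal x < pgf_radius X"
  shows "isCont (pgf_real X) x"
proof -
  obtain z where "ereal x < ereal z" "ereal z < pgf_radius X"
    using ereal_dense2[OF assms(2)] by blast
  then show ?thesis unfolding pgf_real_def[abs_def]
    using assms by (intro isCont_powser summable_pgf_real) auto
qed

lemma pgf_d2_nonneg:
  assumes "1 < pgf_radius X"
  shows "0 \<le> pgf_d2 X"
proof -
  obtain z where z: "1 < ereal z" "ereal z < pgf_radius X"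
    using ereal_dense2[OF assms] by blast
  then have "summable (\<lambda>k. pmf X k * (1 + (z - 1))^k)"
    by (intro summable_pgf_real) auto
  then have "summable (\<lambda>k. real k * (real k - 1) * pmf X k)"
    using z by (intro summable_second_factorial_moment[OF pmf_nonneg, of "z - 1"]) auto
  then show ?thesis
    unfolding pgf_d2_def using of_nat_mult_pred_nonneg by (intro suminf_nonneg) auto
qed

lemma pgf_real_second_order_expansion:
  assumes h0: "0 < h0" "ereal (1 + h0) < pgf_radius X" and \<delta>: "0 \<le> \<delta>" "\<delta> \<le> h0"
  obtains R where "pgf_real X (1 + \<delta>) = 1 + pgf_d1 X * \<delta> + pgf_d2 X / 2 * \<delta>^2 + R"
    "0 \<le> R" "R \<le> pgf_real X (1 + h0) / h0^3 * \<delta>^3"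
proof -
  have "summable (\<lambda>k. pmf X k * (1 + h0)^k)"
    using h0 by (intro summable_pgf_real) auto
  from nonneg_powser_second_order_expansion[OF pmf_nonneg h0(1) this \<delta>]
  obtain R where "(\<Sum>k. pmf X k * (1 + \<delta>)^k) = (\<Sum>k. pmf X k) + (\<Sum>k. real k * pmf X k) * \<delta>
          + (\<Sum>k. real k * (real k - 1) * pmf X k) / 2 * \<delta>^2 + R"
      "0 \<le> R" "R \<le> (\<delta>/h0)^3 * (\<Sum>k. pmf X k * (1 + h0)^k)"
    by blast
  then show thesis using pmf_sums_one[of X]
    by (intro that[of R])
      (simp_all add: sums_iff pgf_real_def pgf_d1_def pgf_d2_def power_divide algebra_simps)
qed

lemma pgf_real_ln_expansion:
  assumes radius: "1 < pgf_radius X" and mean_pos: "0 < pgf_d1 X"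
  obtains h1 K where "0 < h1" "h1 \<le> 1" "ereal (1 + h1) < pgf_radius X" "0 \<le> K"
    "\<And>\<delta>. 0 \<le> \<delta> \<Longrightarrow> \<delta> \<le> h1 \<Longrightarrow>
       \<bar>ln (pgf_real X (1 + \<delta>)) - pgf_d1 X * \<delta> - (pgf_var X - pgf_d1 X)/2 * \<delta>^2\<bar> \<le> K * \<delta>^3"
proof -
  define \<mu> d2 where "\<mu> = pgf_d1 X" and "d2 = pgf_d2 X"
  obtain z where z: "1 < ereal z" "ereal z < pgf_radius X"
    using ereal_dense2[OF radius] by blast
  define h0 where "h0 = z - 1"
  have h0: "0 < h0" "ereal (1 + h0) < pgf_radius X" using z by (auto simp: h0_def)
  define M where "M = pgf_real X (1 + h0) / h0^3"
  define B where "B = \<mu> + d2 * h0 / 2 + M * h0^2"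
  define h1 where "h1 = min h0 (min 1 (1/B))"
  have M: "0 \<le> M" unfolding M_def using pgf_real_ge_one[of "1 + h0" X] h0 by simp
  have d2: "0 \<le> d2" unfolding d2_def using pgf_d2_nonneg[OF radius] .
  have B: "0 < B" unfolding B_def \<mu>_def using mean_pos d2 M h0 by (simp add: add_pos_nonneg)
  have h1: "0 < h1" "h1 \<le> h0" "h1 \<le> 1" "h1 \<le> 1/B"
    unfolding h1_def using h0 B by auto
  show ?thesis
  proof (rule that)
    show "ereal (1 + h1) < pgf_radius X" using ereal_one_plus_less_radius[OF h0(2) h1(2)] .
    show "0 \<le> M + (d2/2 + M * h0) * B + B^3" using M d2 h0 B by simp
    fix \<delta> :: real assume \<delta>: "0 \<le> \<delta>" "\<delta> \<le> h1"
    obtain R where R: "pgf_real X (1 + \<delta>) = 1 + \<mu> * \<delta> + d2/2 * \<delta>^2 + R" "0 \<le> R" "R \<le> M * \<delta>^3"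
      using pgf_real_second_order_expansion[OF h0, of \<delta>] \<delta> h1 unfolding \<mu>_def d2_def M_def by auto
    have "B * \<delta> \<le> 1"
      using mult_left_mono[OF order.trans[OF \<delta>(2) h1(4)], of B] B by simp
    then have "\<bar>ln (1 + (\<mu> * \<delta> + d2/2 * \<delta>^2 + R)) - \<mu> * \<delta> - (d2 - \<mu>^2)/2 * \<delta>^2\<bar>
        \<le> (M + (d2/2 + M * h0) * B + B^3) * \<delta>^3"
      unfolding B_def using \<delta> h1 R \<mu>_def mean_pos d2 M
      by (intro ln_one_plus_second_order) auto
    moreover have "pgf_var X - pgf_d1 X = d2 - \<mu>^2"
      by (simp add: pgf_var_def \<mu>_def d2_def)
    ultimately show "\<bar>ln (pgf_real X (1 + \<delta>)) - pgf_d1 X * \<delta> - (pgf_var X - pgf_d1 X)/2 * \<delta>^2\<bar>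
        \<le> (M + (d2/2 + M * h0) * B + B^3) * \<delta>^3"
      using R(1) by (simp add: \<mu>_def add.assoc)
  qed (use h1 in auto)
qed

section \<open>A perturbed quadratic\<close>

lemma quadratic_model_pos:
  fixes a D \<gamma> \<gamma>1 q \<delta> v :: real
  assumes a: "0 < a" and D: "0 \<le> D" and \<gamma>: "0 < \<gamma>1" "\<gamma>1 \<le> \<gamma>" and q: "1 \<le> q"
    and v: "\<bar>v - (\<gamma> * q * \<delta> - a * q^2 * \<delta>^2)\<bar> \<le> D * (q * \<delta>^2 + q^2 * \<delta>^3)"
    and \<delta>: "0 < \<delta>" "q * \<delta> \<le> min 1 (\<gamma>1 / (2 * (a + 2 * D)))"
  shows "0 < v"
proof -
  define u where "u = q * \<delta>"
  have u: "0 < u" "u \<le> 1" "(a + 2 * D) * u \<le> \<gamma>1 / 2"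
    using \<delta> q a D by (auto simp: u_def field_simps)
  have "\<delta> \<le> u" unfolding u_def using q \<delta> by (simp add: mult_right_mono[of 1 q \<delta>, simplified])
  then have "D * \<delta> \<le> D * u" "D * u * \<delta> \<le> D * u"
    using D u by (auto intro!: mult_left_mono simp: mult_le_cancel_left1 order_trans[of _ u 1]
        mult.assoc)
  then have "0 < \<gamma> - a * u - D * \<delta> - D * u * \<delta>" using \<gamma> u by (simp add: algebra_simps)
  moreover have "\<gamma> * q * \<delta> - a * q^2 * \<delta>^2 - D * (q * \<delta>^2 + q^2 * \<delta>^3)
      = u * (\<gamma> - a * u - D * \<delta> - D * u * \<delta>)"
    unfolding u_def by (simp add: algebra_simps power2_eq_square power3_eq_cube)
  ultimately show ?thesis using v u(1) by (smt (verit) mult_pos_pos)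
qed

lemma quadratic_model_neg:
  fixes a D \<gamma> \<gamma>2 q u v :: real
  assumes D: "0 \<le> D" and \<gamma>: "\<gamma> \<le> \<gamma>2" "0 < \<gamma>2" and u: "0 < u" "2 * \<gamma>2 \<le> a * u"
    and q: "D * (u + u^2) / \<gamma>2 < q"
    and v: "\<bar>v - (\<gamma> * q * (u/q) - a * q^2 * (u/q)^2)\<bar> \<le> D * (q * (u/q)^2 + q^2 * (u/q)^3)"
  shows "v < 0"
proof -
  have q0: "0 < q" using q D \<gamma> u by (smt (verit) divide_nonneg_pos mult_nonneg_nonneg zero_le_power)
  have model: "\<gamma> * q * (u/q) - a * q^2 * (u/q)^2 = u * (\<gamma> - a * u)"
    using q0 by (simp add: field_simps power2_eq_square)
  have error: "D * (q * (u/q)^2 + q^2 * (u/q)^3) = u * (D * (u + u^2) / q)"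
    using q0 by (simp add: field_simps power2_eq_square power3_eq_cube)
  have "D * (u + u^2) / q < \<gamma>2"
    using q q0 \<gamma> by (simp add: field_simps)
  then have "u * (D * (u + u^2) / q) < u * \<gamma>2" using u(1) by (rule mult_strict_left_mono)
  moreover have "u * (\<gamma> - a * u) \<le> u * (- \<gamma>2)" using u \<gamma> by (intro mult_left_mono) auto
  ultimately show ?thesis using v model error by linarith
qed

lemma quadratic_model_root:
  fixes a D \<gamma> q \<delta> u :: real
  assumes D: "0 \<le> D" and q: "0 < q"
    and root: "\<bar>\<gamma> * q * \<delta> - a * q^2 * \<delta>^2\<bar> \<le> D * (q * \<delta>^2 + q^2 * \<delta>^3)"
    and \<delta>: "0 < \<delta>" "q * \<delta> \<le> u"
  shows "\<bar>\<gamma> - a * (q * \<delta>)\<bar> \<le> D * (u + u^2) / q"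
proof -
  have "\<gamma> * q * \<delta> - a * q^2 * \<delta>^2 = q * \<delta> * (\<gamma> - a * (q * \<delta>))"
    by (simp add: algebra_simps power2_eq_square)
  moreover have "D * (q * \<delta>^2 + q^2 * \<delta>^3) = q * \<delta> * (D * (q * \<delta> + (q * \<delta>)^2) / q)"
    using q by (simp add: field_simps power2_eq_square power3_eq_cube)
  moreover have q\<delta>: "0 < q * \<delta>" using q \<delta> by simp
  ultimately have "q * \<delta> * \<bar>\<gamma> - a * (q * \<delta>)\<bar> \<le> q * \<delta> * (D * (q * \<delta> + (q * \<delta>)^2) / q)"
    using root by (simp only: abs_mult[of "q * \<delta>"] abs_of_pos[OF q\<delta>])
  then have "\<bar>\<gamma> - a * (q * \<delta>)\<bar> \<le> D * (q * \<delta> + (q * \<delta>)^2) / q"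
    using mult_le_cancel_left_pos[OF q\<delta>] by blast
  also have "\<dots> \<le> D * (u + u^2) / q"
    using D q \<delta> by (intro divide_right_mono mult_left_mono add_mono power_mono) auto
  finally show ?thesis .
qed

lemma quadratic_model_sign_change:
  fixes F :: "real \<Rightarrow> real" and a D \<gamma> \<gamma>1 \<gamma>2 q h :: real
  defines "u1 \<equiv> 2 * \<gamma>2 / a"
  assumes a: "0 < a" and D: "0 \<le> D" and \<gamma>: "0 < \<gamma>1" "\<gamma>1 \<le> \<gamma>" "\<gamma> \<le> \<gamma>2" and h: "0 < h"
    and q: "1 + u1 / h + D * (u1 + u1^2) / \<gamma>2 \<le> q"
      \<comment> \<open>so that \<open>u1/q \<le> h\<close> and the model error at \<open>u1/q\<close> stays below \<open>u1 \<gamma>2\<close>\<close>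
    and model: "\<And>\<delta>. 0 \<le> \<delta> \<Longrightarrow> \<delta> \<le> h \<Longrightarrow>
                  \<bar>F \<delta> - (\<gamma> * q * \<delta> - a * q^2 * \<delta>^2)\<bar> \<le> D * (q * \<delta>^2 + q^2 * \<delta>^3)"
  obtains d0 d1 where "0 < d0" "d0 \<le> d1" "d1 \<le> h" "q * d1 \<le> u1"
    "\<forall>\<delta>\<in>{0<..d0}. 0 < F \<delta>" "F d1 < 0"
proof -
  define u0 where "u0 = min 1 (\<gamma>1 / (2 * (a + 2 * D)))"
  have u1: "0 < u1" unfolding u1_def using a \<gamma> by simp
  have terms: "0 \<le> u1 / h" "0 \<le> D * (u1 + u1^2) / \<gamma>2" using u1 h D \<gamma> by simp_all
  have q1: "1 \<le> q" using q terms by linarith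
  have "u0 \<le> \<gamma>1 / (2 * (a + 2 * D))" unfolding u0_def by simp
  also have "\<dots> \<le> \<gamma>1 / (2 * a)" using a D \<gamma> by (intro divide_left_mono) auto
  also have "\<dots> \<le> u1" unfolding u1_def using a \<gamma> by (simp add: field_simps)
  finally have u0_u1: "u0 / q \<le> u1 / q" using q1 by (simp add: divide_right_mono)
  have "u1 / h \<le> q" using q terms by linarith
  then have u1_h: "u1 / q \<le> h" using h q1 by (simp add: field_simps)
  show thesis
  proof (rule that)
    show "0 < u0 / q" unfolding u0_def using \<gamma> a D q1 by simp
    show "u0 / q \<le> u1 / q" "u1 / q \<le> h" "q * (u1 / q) \<le> u1" by (fact u0_u1, fact u1_h) (use q1 in simp)
    show "\<forall>\<delta>\<in>{0<..u0 / q}. 0 < F \<delta>"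
    proof
      fix \<delta> assume "\<delta> \<in> {0<..u0 / q}"
      then have \<delta>: "0 < \<delta>" "\<delta> \<le> u0 / q" by auto
      show "0 < F \<delta>"
      proof (rule quadratic_model_pos[OF a D \<gamma>(1,2) q1 _ \<delta>(1)])
        show "\<bar>F \<delta> - (\<gamma> * q * \<delta> - a * q^2 * \<delta>^2)\<bar> \<le> D * (q * \<delta>^2 + q^2 * \<delta>^3)"
          using \<delta> u0_u1 u1_h by (intro model) auto
        show "q * \<delta> \<le> min 1 (\<gamma>1 / (2 * (a + 2 * D)))"
          using \<delta> q1 unfolding u0_def by (simp add: field_simps)
      qed
    qed
    show "F (u1 / q) < 0"
    proof (rule quadratic_model_neg[OF D \<gamma>(3) _ u1])
      show "0 < \<gamma>2" "2 * \<gamma>2 \<le> a * u1" using \<gamma> a by (simp_all add: u1_def)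
      show "D * (u1 + u1^2) / \<gamma>2 < q" using q terms by linarith
      show "\<bar>F (u1 / q) - (\<gamma> * q * (u1 / q) - a * q^2 * (u1 / q)^2)\<bar>
          \<le> D * (q * (u1 / q)^2 + q^2 * (u1 / q)^3)"
        using u1 q1 u1_h by (intro model) auto
    qed
  qed
qed

section \<open>The characteristic equation near \<open>z = 1\<close>\<close>

text \<open>The function \<open>F\<close> of the proof idea; \<open>z^s = X(z)^n\<close> is the paper's characteristic equation
  \<open>z^s = A(z)\<close> with \<open>A = X^n\<close>.\<close>
definition char_defect :: "nat pmf \<Rightarrow> nat \<Rightarrow> nat \<Rightarrow> real \<Rightarrow> real" where
  "char_defect X s n \<delta> = real s * ln (1 + \<delta>) - real n * ln (pgf_real X (1 + \<delta>))"

definition minimal_char_root :: "nat pmf \<Rightarrow> nat \<Rightarrow> nat \<Rightarrow> complex \<Rightarrow> bool" where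
  "minimal_char_root X s n Z0 \<longleftrightarrow>
     1 < cmod Z0 \<and> ereal (cmod Z0) < pgf_radius X \<and> Z0 ^ s = pgf X Z0 ^ n \<and>
     (\<forall>z. 1 < cmod z \<and> ereal (cmod z) < pgf_radius X \<and> z ^ s = pgf X z ^ n \<longrightarrow> cmod Z0 \<le> cmod z)"

lemma continuous_on_char_defect:
  assumes "ereal (1 + h) < pgf_radius X"
  shows "continuous_on {0..h} (char_defect X s n)"
proof (intro continuous_at_imp_continuous_on ballI)
  fix \<delta> assume "\<delta> \<in> {0..h}"
  then have \<delta>: "0 \<le> \<delta>" "ereal (1 + \<delta>) < pgf_radius X"
    using ereal_one_plus_less_radius[OF assms] by auto
  have "isCont (pgf_real X) (1 + \<delta>)" using isCont_pgf_real \<delta> by simp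
  then have "isCont (\<lambda>\<delta>. pgf_real X (1 + \<delta>)) \<delta>"
    using isCont_o2[where f = "\<lambda>\<delta>. 1 + \<delta>" and a = \<delta> and g = "pgf_real X"] by simp
  moreover have "0 < pgf_real X (1 + \<delta>)" using pgf_real_ge_one[of "1 + \<delta>" X] \<delta> by simp
  ultimately show "isCont (char_defect X s n) \<delta>"
    unfolding char_defect_def[abs_def] using \<delta>(1)
    by (intro continuous_intros) auto
qed

lemma char_defect_eq_0_iff:
  assumes "0 \<le> \<delta>" "ereal (1 + \<delta>) < pgf_radius X"
  shows "char_defect X s n \<delta> = 0 \<longleftrightarrow> (1 + \<delta>)^s = pgf_real X (1 + \<delta>)^n"
  using power_eq_power_iff_ln[of "1 + \<delta>" "pgf_real X (1 + \<delta>)" s n] pgf_real_ge_one[of "1 + \<delta>" X] assms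
  by (simp add: char_defect_def)

lemma char_defect_less_0_iff:
  assumes "0 \<le> \<delta>" "ereal (1 + \<delta>) < pgf_radius X"
  shows "char_defect X s n \<delta> < 0 \<longleftrightarrow> (1 + \<delta>)^s < pgf_real X (1 + \<delta>)^n"
  using power_less_power_iff_ln[of "1 + \<delta>" "pgf_real X (1 + \<delta>)" s n] pgf_real_ge_one[of "1 + \<delta>" X] assms
  by (simp add: char_defect_def)

lemma char_root_of_char_defect_eq_0:
  assumes "0 \<le> \<delta>" "ereal (1 + \<delta>) < pgf_radius X" "char_defect X s n \<delta> = 0"
  shows "complex_of_real (1 + \<delta>) ^ s = pgf X (complex_of_real (1 + \<delta>)) ^ n"
proof -
  have "(1 + \<delta>)^s = pgf_real X (1 + \<delta>)^n" using char_defect_eq_0_iff assms by blast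
  then have "complex_of_real ((1 + \<delta>)^s) = complex_of_real (pgf_real X (1 + \<delta>)^n)" by simp
  then show ?thesis using pgf_of_real[of "1 + \<delta>" X] assms by simp
qed

text \<open>Here \<open>\<Phi>\<close> stands for \<open>ln X(1 + \<delta>)\<close> and \<open>c\<close> for \<open>(\<sigma>\<^sup>2 - \<mu>)/2\<close>, so that
  \<open>1/2 + c/\<mu> = \<sigma>\<^sup>2/(2\<mu>)\<close>.\<close>
lemma log_defect_quadratic_model:
  fixes \<mu> c K \<gamma> \<gamma>2 \<delta> \<Phi> :: real and s n :: nat
  assumes mu: "0 < \<mu>" and K: "0 \<le> K"
    and Phi: "\<bar>\<Phi> - \<mu> * \<delta> - c * \<delta>^2\<bar> \<le> K * \<delta>^3"
    and nmu: "real n * \<mu> < real s"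
    and \<gamma>: "\<gamma> = (1 - real n * \<mu> / real s) * sqrt (real s)" "\<gamma> \<le> \<gamma>2"
    and \<delta>: "0 \<le> \<delta>"
  shows "\<bar>real s * ln (1 + \<delta>) - real n * \<Phi> - (\<gamma> * sqrt (real s) * \<delta> - (1/2 + c/\<mu>) * real s * \<delta>^2)\<bar>
     \<le> (\<bar>c\<bar> * \<gamma>2/\<mu> + 1 + K/\<mu>) * (sqrt (real s) * \<delta>^2 + real s * \<delta>^3)"
proof -
  define e1 where "e1 = ln (1 + \<delta>) - (\<delta> - \<delta>^2/2)"
  define e2 where "e2 = \<Phi> - \<mu> * \<delta> - c * \<delta>^2"
  have "0 < real s" using nmu mult_nonneg_nonneg[of "real n" \<mu>] mu by linarith
  then have s: "0 < s" by simp
  have \<gamma>_sqrt: "\<gamma> * sqrt (real s) = real s - real n * \<mu>"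
    using s unfolding \<gamma> by (simp add: field_simps)
  have \<gamma>0: "0 \<le> \<gamma>" using nmu s unfolding \<gamma> by (simp add: field_simps)
  have "real s * ln (1 + \<delta>) - real n * \<Phi> - (\<gamma> * sqrt (real s) * \<delta> - (1/2 + c/\<mu>) * real s * \<delta>^2)
     = real s * e1 - real n * e2 + (c/\<mu>) * (\<gamma> * sqrt (real s)) * \<delta>^2"
    unfolding e1_def e2_def \<gamma>_sqrt using mu by (simp add: field_simps power2_eq_square)
  moreover have "\<bar>real s * e1\<bar> \<le> real s * \<delta>^3"
    using abs_ln_one_plus_minus_quadratic_le[OF \<delta>] by (simp add: e1_def abs_mult mult_left_mono)
  moreover have "\<bar>real n * e2\<bar> \<le> K/\<mu> * (real s * \<delta>^3)"
  proof -
    have "\<bar>real n * e2\<bar> \<le> real n * (K * \<delta>^3)" using Phi by (simp add: e2_def abs_mult mult_left_mono)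
    also have "\<dots> \<le> (real s / \<mu>) * (K * \<delta>^3)"
      using nmu mu K \<delta> by (intro mult_right_mono) (auto simp: field_simps)
    finally show ?thesis by (simp add: field_simps)
  qed
  moreover have "\<bar>(c/\<mu>) * (\<gamma> * sqrt (real s)) * \<delta>^2\<bar> \<le> \<bar>c\<bar> * \<gamma>2/\<mu> * (sqrt (real s) * \<delta>^2)"
  proof -
    have "\<bar>(c/\<mu>) * (\<gamma> * sqrt (real s)) * \<delta>^2\<bar> = \<bar>c\<bar>/\<mu> * \<gamma> * (sqrt (real s) * \<delta>^2)"
      using mu \<gamma>0 by (simp add: abs_mult)
    also have "\<dots> \<le> \<bar>c\<bar>/\<mu> * \<gamma>2 * (sqrt (real s) * \<delta>^2)"
      using \<gamma> mu by (intro mult_right_mono mult_left_mono) auto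
    finally show ?thesis by simp
  qed
  ultimately have "\<bar>real s * ln (1 + \<delta>) - real n * \<Phi>
      - (\<gamma> * sqrt (real s) * \<delta> - (1/2 + c/\<mu>) * real s * \<delta>^2)\<bar>
    \<le> real s * \<delta>^3 + K/\<mu> * (real s * \<delta>^3) + \<bar>c\<bar> * \<gamma>2/\<mu> * (sqrt (real s) * \<delta>^2)"
    by (smt (verit))
  also have "\<dots> \<le> (\<bar>c\<bar> * \<gamma>2/\<mu> + 1 + K/\<mu>) * (sqrt (real s) * \<delta>^2 + real s * \<delta>^3)"
  proof -
    have "0 \<le> \<bar>c\<bar> * \<gamma>2/\<mu> * (real s * \<delta>^3)" "0 \<le> K/\<mu> * (sqrt (real s) * \<delta>^2)"
      "0 \<le> sqrt (real s) * \<delta>^2"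
      using mu \<gamma>0 \<gamma> K \<delta> by simp_all
    then show ?thesis unfolding distrib_left distrib_right mult_1_left by linarith
  qed
  finally show ?thesis .
qed

lemma minimal_char_root_le_real_root:
  assumes Z0: "minimal_char_root X s n Z0"
    and \<delta>: "0 < \<delta>" "ereal (1 + \<delta>) < pgf_radius X" "char_defect X s n \<delta> = 0"
  shows "cmod Z0 \<le> 1 + \<delta>"
proof -
  have "complex_of_real (1 + \<delta>) ^ s = pgf X (complex_of_real (1 + \<delta>)) ^ n"
    using \<delta> by (intro char_root_of_char_defect_eq_0) auto
  moreover have "\<forall>z. 1 < cmod z \<and> ereal (cmod z) < pgf_radius X \<and> z ^ s = pgf X z ^ n \<longrightarrow> cmod Z0 \<le> cmod z"
    using Z0 unfolding minimal_char_root_def by blast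
  ultimately show ?thesis
    using \<delta>(1,2) by (auto simp: norm_one_plus_of_real dest: spec[of _ "complex_of_real (1 + \<delta>)"])
qed

lemma minimal_char_root_real:
  fixes X :: "nat pmf" and Z0 :: complex
  assumes strict_max: "\<And>r1 z. 0 < r1 \<Longrightarrow> ereal r1 < pgf_radius X \<Longrightarrow> cmod z = r1 \<Longrightarrow>
                        z \<noteq> complex_of_real r1 \<Longrightarrow> cmod (pgf X z) < pgf_real X r1"
    and n: "0 < n"
    and Z0: "minimal_char_root X s n Z0"
    and pos: "0 < d0" "\<forall>\<delta>\<in>{0<..d0}. 0 < char_defect X s n \<delta>"
  obtains d where "Z0 = complex_of_real (1 + d)" "0 < d" "char_defect X s n d = 0"
proof -
  have Z0_root: "1 < cmod Z0" "ereal (cmod Z0) < pgf_radius X" "Z0 ^ s = pgf X Z0 ^ n"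
    using Z0 unfolding minimal_char_root_def by blast+
  define d where "d = cmod Z0 - 1"
  have d: "0 < d" "ereal (1 + d) < pgf_radius X" using Z0_root by (simp_all add: d_def)
  have no_smaller_root: "\<delta> = d" if \<delta>: "0 < \<delta>" "\<delta> \<le> d" "char_defect X s n \<delta> = 0" for \<delta>
    using minimal_char_root_le_real_root[OF Z0 \<delta>(1) ereal_one_plus_less_radius[OF d(2) \<delta>(2)] \<delta>(3)] \<delta>(2)
    by (simp add: d_def)
  have "Z0 = complex_of_real (cmod Z0)"
  proof (rule ccontr)
    assume "Z0 \<noteq> complex_of_real (cmod Z0)"
    then have "cmod (pgf X Z0) < pgf_real X (1 + d)"
      using strict_max[of "cmod Z0" Z0] Z0_root by (force simp: d_def)
    then have "(1 + d)^s < pgf_real X (1 + d)^n"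
      using arg_cong[OF Z0_root(3), of cmod] n by (simp add: d_def norm_power power_strict_mono)
    then have neg: "char_defect X s n d < 0" using char_defect_less_0_iff d by simp
    have "d \<notin> {0<..d0}" using pos(2) neg by fastforce
    then have "d0 \<le> d" using d(1) by simp
    moreover have "0 \<le> char_defect X s n d0" using pos by (simp add: less_imp_le)
    moreover have "continuous_on {d0..d} (char_defect X s n)"
      using continuous_on_subset[OF continuous_on_char_defect[OF d(2)]] pos(1) by auto
    ultimately obtain \<delta> where \<delta>: "d0 \<le> \<delta>" "\<delta> \<le> d" "char_defect X s n \<delta> = 0"
      using IVT2'[of "char_defect X s n" d 0 d0] neg by auto
    then have "\<delta> = d" using no_smaller_root pos(1) by simp
    with \<delta>(3) neg show False by simp
  qed
  then have Z0_eq: "Z0 = complex_of_real (1 + d)" by (simp add: d_def)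
  have "complex_of_real ((1 + d)^s) = complex_of_real (pgf_real X (1 + d)^n)"
    using Z0_root(3)[unfolded Z0_eq] pgf_of_real[of "1 + d" X] d by simp
  then have "(1 + d)^s = pgf_real X (1 + d)^n" by (simp only: of_real_eq_iff)
  then have "char_defect X s n d = 0" using char_defect_eq_0_iff d by simp
  with Z0_eq d(1) show thesis by (rule that)
qed

lemma minimal_char_root_location:
  fixes X :: "nat pmf" and Z0 :: complex and a D \<gamma> \<gamma>1 \<gamma>2 q h :: real
  assumes strict_max: "\<And>r1 z. 0 < r1 \<Longrightarrow> ereal r1 < pgf_radius X \<Longrightarrow> cmod z = r1 \<Longrightarrow>
                        z \<noteq> complex_of_real r1 \<Longrightarrow> cmod (pgf X z) < pgf_real X r1"
    and n: "0 < n"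
    and Z0: "minimal_char_root X s n Z0"
    and a: "0 < a" and D: "0 \<le> D" and \<gamma>: "0 < \<gamma>1" "\<gamma>1 \<le> \<gamma>" "\<gamma> \<le> \<gamma>2"
    and h: "0 < h" "ereal (1 + h) < pgf_radius X"
    and q: "1 + 2 * \<gamma>2 / a / h + D * (2 * \<gamma>2 / a + (2 * \<gamma>2 / a)^2) / \<gamma>2 \<le> q"
    and model: "\<And>\<delta>. 0 \<le> \<delta> \<Longrightarrow> \<delta> \<le> h \<Longrightarrow>
       \<bar>char_defect X s n \<delta> - (\<gamma> * q * \<delta> - a * q^2 * \<delta>^2)\<bar> \<le> D * (q * \<delta>^2 + q^2 * \<delta>^3)"
  obtains d where "Z0 = complex_of_real (1 + d)" "0 < d" "d \<le> h" "q * d \<le> 2 * \<gamma>2 / a"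
    "char_defect X s n d = 0"
proof -
  obtain d0 d1 where sign: "0 < d0" "d0 \<le> d1" "d1 \<le> h" "q * d1 \<le> 2 * \<gamma>2 / a"
      "\<forall>\<delta>\<in>{0<..d0}. 0 < char_defect X s n \<delta>" "char_defect X s n d1 < 0"
    using a D \<gamma> h(1) q model by (rule quadratic_model_sign_change) blast
  have "continuous_on {d0..d1} (char_defect X s n)"
    using continuous_on_subset[OF continuous_on_char_defect[OF h(2)]] sign(1,3) by auto
  moreover have "0 \<le> char_defect X s n d0" using sign(1,5) by (simp add: less_imp_le)
  ultimately obtain r where r: "d0 \<le> r" "r \<le> d1" "char_defect X s n r = 0"
    using IVT2'[of "char_defect X s n" d1 0 d0] sign(2,6) by auto
  obtain d where d: "Z0 = complex_of_real (1 + d)" "0 < d" "char_defect X s n d = 0"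
    using strict_max n Z0 sign(1,5) by (rule minimal_char_root_real) blast
  have r_radius: "ereal (1 + r) < pgf_radius X"
    using ereal_one_plus_less_radius[OF h(2)] r(2) sign(3) by simp
  have "cmod Z0 \<le> 1 + r"
    using minimal_char_root_le_real_root[OF Z0 _ r_radius r(3)] r(1) sign(1) by simp
  then have "1 + d \<le> 1 + r" using d(2) unfolding d(1) by (simp add: norm_one_plus_of_real)
  then have "d \<le> d1" using r(2) by simp
  moreover have "0 \<le> 2 * \<gamma>2 / a / h" "0 \<le> D * (2 * \<gamma>2 / a + (2 * \<gamma>2 / a)^2) / \<gamma>2"
    using a D \<gamma> h by simp_all
  then have "0 \<le> q" using q by linarith
  ultimately have "q * d \<le> q * d1" by (rule mult_left_mono)
  then have "q * d \<le> 2 * \<gamma>2 / a" using sign(4) by linarith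
  with d \<open>d \<le> d1\<close> sign(3) show thesis by (intro that) auto
qed

lemma minimal_char_root_estimate:
  fixes X :: "nat pmf" and \<gamma>1 \<gamma>2 :: real
  defines "a \<equiv> pgf_var X / (2 * pgf_d1 X)"
  assumes radius: "1 < pgf_radius X" and mean_pos: "0 < pgf_d1 X" and var_pos: "0 < pgf_var X"
    and strict_max: "\<And>r1 z. 0 < r1 \<Longrightarrow> ereal r1 < pgf_radius X \<Longrightarrow> cmod z = r1 \<Longrightarrow>
                        z \<noteq> complex_of_real r1 \<Longrightarrow> cmod (pgf X z) < pgf_real X r1"
    and \<gamma>_bounds: "0 < \<gamma>1" "\<gamma>1 \<le> \<gamma>2"
  obtains Q E where "1 \<le> Q" "0 \<le> E"
    "\<And>s n \<gamma> Z0. Q^2 \<le> real s \<Longrightarrow> 0 < n \<Longrightarrow> real n * pgf_d1 X < real s \<Longrightarrow>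
       \<gamma> = (1 - real n * pgf_d1 X / real s) * sqrt (real s) \<Longrightarrow> \<gamma>1 \<le> \<gamma> \<Longrightarrow> \<gamma> \<le> \<gamma>2 \<Longrightarrow>
       minimal_char_root X s n Z0 \<Longrightarrow>
       Z0 = complex_of_real (cmod Z0) \<and>
       \<bar>sqrt (real s) * ln (cmod Z0) - \<gamma> / a\<bar> \<le> E / sqrt (real s)"
proof -
  define \<mu> c where "\<mu> = pgf_d1 X" and "c = (pgf_var X - pgf_d1 X) / 2"
  obtain h1 K where h1: "0 < h1" "h1 \<le> 1" "ereal (1 + h1) < pgf_radius X" and K: "0 \<le> K"
    and ln_pgf: "\<And>\<delta>. 0 \<le> \<delta> \<Longrightarrow> \<delta> \<le> h1 \<Longrightarrow>
                  \<bar>ln (pgf_real X (1 + \<delta>)) - \<mu> * \<delta> - c * \<delta>^2\<bar> \<le> K * \<delta>^3"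
    using pgf_real_ln_expansion[OF radius mean_pos] unfolding \<mu>_def c_def by blast
  have a: "0 < a" "a = 1/2 + c/\<mu>"
    using mean_pos var_pos by (simp_all add: a_def c_def \<mu>_def field_simps)
  define D u1 where "D = \<bar>c\<bar> * \<gamma>2 / \<mu> + 1 + K / \<mu>" and "u1 = 2 * \<gamma>2 / a"
  define Q E where "Q = 1 + u1 / h1 + D * (u1 + u1^2) / \<gamma>2" and "E = u1^2 + D * (u1 + u1^2) / a"
  have D: "0 \<le> D" and u1: "0 < u1"
    using mean_pos K \<gamma>_bounds a by (simp_all add: D_def u1_def \<mu>_def)
  show ?thesis
  proof (rule that)
    show "1 \<le> Q" "0 \<le> E" using u1 h1 D \<gamma>_bounds a by (simp_all add: Q_def E_def)
    fix s n \<gamma> and Z0 :: complex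
    assume s: "Q^2 \<le> real s" and n: "0 < n" "real n * pgf_d1 X < real s"
      and \<gamma>: "\<gamma> = (1 - real n * pgf_d1 X / real s) * sqrt (real s)" "\<gamma>1 \<le> \<gamma>" "\<gamma> \<le> \<gamma>2"
      and Z0: "minimal_char_root X s n Z0"
    define q where "q = sqrt (real s)"
    have "Q \<le> q" using real_le_rsqrt[OF s] by (simp add: q_def)
    with \<open>1 \<le> Q\<close> have q: "Q \<le> q" "0 < q" by simp_all
    have model: "\<bar>char_defect X s n \<delta> - (\<gamma> * q * \<delta> - a * q^2 * \<delta>^2)\<bar> \<le> D * (q * \<delta>^2 + q^2 * \<delta>^3)"
      if "0 \<le> \<delta>" "\<delta> \<le> h1" for \<delta>
      using log_defect_quadratic_model[OF mean_pos K ln_pgf[OF that, unfolded \<mu>_def] n(2) \<gamma>(1,3) that(1)]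
      unfolding char_defect_def D_def a(2) q_def \<mu>_def by simp
    obtain d where d: "Z0 = complex_of_real (1 + d)" "0 < d" "d \<le> h1" "q * d \<le> u1"
        "char_defect X s n d = 0"
      using strict_max n(1) Z0 a(1) D \<gamma>_bounds(1) \<gamma>(2,3) h1(1,3)
        q(1)[unfolded Q_def u1_def] model
      unfolding u1_def by (rule minimal_char_root_location) blast
    have "\<bar>\<gamma> - a * (q * d)\<bar> \<le> D * (u1 + u1^2) / q"
    proof (rule quadratic_model_root[OF D q(2) _ d(2,4)])
      show "\<bar>\<gamma> * q * d - a * q^2 * d^2\<bar> \<le> D * (q * d^2 + q^2 * d^3)"
        using model[of d] d by simp
    qed
    then have "\<bar>q * ln (1 + d) - \<gamma> / a\<bar> \<le> E / q"
      using scaled_ln_one_plus_estimate[OF a(1) q(2) _ _ d(4)] d(2,3) h1(2) by (simp add: E_def)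
    moreover have "cmod Z0 = 1 + d" using d(2) unfolding d(1) by (simp add: norm_one_plus_of_real)
    ultimately show "Z0 = complex_of_real (cmod Z0) \<and>
        \<bar>sqrt (real s) * ln (cmod Z0) - \<gamma> / a\<bar> \<le> E / sqrt (real s)"
      using d(1) by (simp add: q_def)
  qed
qed

lemma minimal_char_root_power_bound:
  fixes X :: "nat pmf" and \<gamma>1 \<gamma>2 L1 L2 :: real
  assumes radius: "1 < pgf_radius X" and mean_pos: "0 < pgf_d1 X" and var_pos: "0 < pgf_var X"
    and strict_max: "\<And>r1 z. 0 < r1 \<Longrightarrow> ereal r1 < pgf_radius X \<Longrightarrow> cmod z = r1 \<Longrightarrow>
                        z \<noteq> complex_of_real r1 \<Longrightarrow> cmod (pgf X z) < pgf_real X r1"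
    and \<gamma>_bounds: "0 < \<gamma>1" "\<gamma>1 \<le> \<gamma>2" and L_bounds: "0 < L1" "L1 \<le> L2"
  obtains C S0 where
    "\<And>s n N \<gamma> L Z0. \<gamma> = (1 - real n * pgf_d1 X / real s) * sqrt (real s) \<Longrightarrow> \<gamma>1 \<le> \<gamma> \<Longrightarrow> \<gamma> \<le> \<gamma>2 \<Longrightarrow>
       L = real (N + 1) / sqrt (real s) \<Longrightarrow> L1 \<le> L \<Longrightarrow> L \<le> L2 \<Longrightarrow>
       S0 \<le> s \<Longrightarrow> 0 < n \<Longrightarrow> real n * pgf_d1 X < real s \<Longrightarrow> minimal_char_root X s n Z0 \<Longrightarrow>
       cmod (1 / Z0 ^ (N + 1) - complex_of_real (exp (- 2 * L * \<gamma> * pgf_d1 X / pgf_var X)))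
         \<le> C * exp (- 2 * L * \<gamma> * pgf_d1 X / pgf_var X) / sqrt (real s)"
proof -
  define a where "a = pgf_var X / (2 * pgf_d1 X)"
  obtain Q E where Q: "1 \<le> Q" and E: "0 \<le> E"
    and estimate: "\<And>s n \<gamma> Z0. Q^2 \<le> real s \<Longrightarrow> 0 < n \<Longrightarrow> real n * pgf_d1 X < real s \<Longrightarrow>
       \<gamma> = (1 - real n * pgf_d1 X / real s) * sqrt (real s) \<Longrightarrow> \<gamma>1 \<le> \<gamma> \<Longrightarrow> \<gamma> \<le> \<gamma>2 \<Longrightarrow>
       minimal_char_root X s n Z0 \<Longrightarrow>
       Z0 = complex_of_real (cmod Z0) \<and>
       \<bar>sqrt (real s) * ln (cmod Z0) - \<gamma> / a\<bar> \<le> E / sqrt (real s)"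
    using minimal_char_root_estimate[OF radius mean_pos var_pos strict_max \<gamma>_bounds]
    unfolding a_def by blast
  have bound: "cmod (1 / Z0 ^ (N + 1) - complex_of_real (exp (- 2 * L * \<gamma> * pgf_d1 X / pgf_var X)))
      \<le> L2 * E * exp (L2 * E) * exp (- 2 * L * \<gamma> * pgf_d1 X / pgf_var X) / sqrt (real s)"
    if \<gamma>: "\<gamma> = (1 - real n * pgf_d1 X / real s) * sqrt (real s)" "\<gamma>1 \<le> \<gamma>" "\<gamma> \<le> \<gamma>2"
      and L: "L = real (N + 1) / sqrt (real s)" "L1 \<le> L" "L \<le> L2"
      and s: "nat \<lceil>Q^2\<rceil> \<le> s" and n: "0 < n" "real n * pgf_d1 X < real s"
      and Z0: "minimal_char_root X s n Z0"
    for s n N \<gamma> L and Z0 :: complex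
  proof -
    have s: "Q^2 \<le> real s" "1 \<le> sqrt (real s)"
      using s Q real_le_rsqrt[of Q "real s"] by linarith+
    have Z0_real: "Z0 = complex_of_real (cmod Z0)"
      and close: "\<bar>sqrt (real s) * ln (cmod Z0) - \<gamma> / a\<bar> \<le> E / sqrt (real s)"
      using estimate[OF s(1) n \<gamma> Z0] by blast+
    have exponent: "- 2 * L * \<gamma> * pgf_d1 X / pgf_var X = - (L * (\<gamma> / a))"
      using mean_pos var_pos by (simp add: a_def field_simps)
    have "cmod (1 / complex_of_real (cmod Z0) ^ (N + 1) - complex_of_real (exp (- (L * (\<gamma> / a)))))
        \<le> L2 * E * exp (L2 * E) * exp (- (L * (\<gamma> / a))) / sqrt (real s)"
    proof (rule inverse_power_exp_estimate[OF _ s(2) E close])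
      show "1 < cmod Z0" using Z0 by (simp add: minimal_char_root_def)
      show "real (N + 1) = L * sqrt (real s)" using L(1) s(2) by simp
      show "0 < L" "L \<le> L2" using L(2,3) L_bounds by simp_all
    qed
    then show ?thesis unfolding exponent by (subst Z0_real)
  qed
  then show thesis by (rule that)
qed

theorem proposition3p2:
  fixes X :: "nat pmf"
    and \<gamma>1 \<gamma>2 L1 L2 :: real
  assumes radius: "pgf_radius X > 1"
    and mean_pos: "pgf_d1 X > 0"
    and var_pos: "pgf_var X > 0"
    and strict_max: "\<And>r1 z. 0 < r1 \<Longrightarrow> ereal r1 < pgf_radius X \<Longrightarrow> cmod z = r1 \<Longrightarrow>
                        z \<noteq> complex_of_real r1 \<Longrightarrow> cmod (pgf X z) < pgf_real X r1"
    and \<gamma>_bounds: "0 < \<gamma>1" "\<gamma>1 \<le> \<gamma>2"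
    and L_bounds: "0 < L1" "L1 \<le> L2"
  shows "\<exists>C S0. \<forall>(s::nat) (n::nat) (N::nat) (Z0::complex).
     (let \<mu> = pgf_d1 X; \<sigma>2 = pgf_var X;
          \<gamma> = (1 - real n * \<mu> / real s) * sqrt (real s);
          L = real (N + 1) / sqrt (real s)
      in s \<ge> S0 \<and> 0 < s \<and> 0 < n \<and> real n * \<mu> < real s
         \<and> (\<exists>k. real k > real s / real n \<and> pmf X k \<noteq> 0)
         \<and> \<gamma>1 \<le> \<gamma> \<and> \<gamma> \<le> \<gamma>2 \<and> L1 \<le> L \<and> L \<le> L2
         \<and> 1 < cmod Z0 \<and> ereal (cmod Z0) < pgf_radius X \<and> Z0 ^ s = pgf X Z0 ^ n
         \<and> (\<forall>z. 1 < cmod z \<and> ereal (cmod z) < pgf_radius X \<and> z ^ s = pgf X z ^ n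
                 \<longrightarrow> cmod Z0 \<le> cmod z)
      \<longrightarrow> cmod (1 / Z0 ^ (N + 1) - complex_of_real (exp (- 2 * L * \<gamma> * \<mu> / \<sigma>2)))
            \<le> C * exp (- 2 * L * \<gamma> * \<mu> / \<sigma>2) / sqrt (real s))"
  using radius mean_pos var_pos strict_max \<gamma>_bounds L_bounds
proof (rule minimal_char_root_power_bound)
  fix C S0
  assume bound: "\<And>s n N \<gamma> L Z0. \<gamma> = (1 - real n * pgf_d1 X / real s) * sqrt (real s) \<Longrightarrow> \<gamma>1 \<le> \<gamma> \<Longrightarrow> \<gamma> \<le> \<gamma>2 \<Longrightarrow>
     L = real (N + 1) / sqrt (real s) \<Longrightarrow> L1 \<le> L \<Longrightarrow> L \<le> L2 \<Longrightarrow>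
     S0 \<le> s \<Longrightarrow> 0 < n \<Longrightarrow> real n * pgf_d1 X < real s \<Longrightarrow> minimal_char_root X s n Z0 \<Longrightarrow>
     cmod (1 / Z0 ^ (N + 1) - complex_of_real (exp (- 2 * L * \<gamma> * pgf_d1 X / pgf_var X)))
       \<le> C * exp (- 2 * L * \<gamma> * pgf_d1 X / pgf_var X) / sqrt (real s)"
  \<comment> \<open>The degree hypothesis only guarantees that \<open>Z0\<close> exists, which is assumed here anyway.\<close>
  show ?thesis
    unfolding Let_def
    by (intro exI[of _ C] exI[of _ S0] allI impI)
      (elim conjE, rule bound[OF refl _ _ refl], simp_all add: minimal_char_root_def)
qed

end
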